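(* Consider a credit-attribution game in which every paper has exactly two authors, two distinct players $x,y$, and the reliability extension of the full credit game with fixed $p_x,p_y\in[0,1]$, baseline reliabilities $p^*_l\in(0,1]$, cost slopes $L_l,R_l>0$ and budget $B\ge0$. In the pairwise attack problem one must choose a feasible fractional attack on $x$ that leaves the reliabilities of $y$ and of all coauthors of $y$ at their baseline values, minimizing $Sh[\overline{v_{FC}}](x)$. Then the following is an optimal pairwise attack: run the greedy procedure (sort by decreasing $C(x,l)/R_l$, raise to $1$ in order while the budget allows, raise the next one as much as the remaining budget allows, leave everything else at baseline) restricted to the players $l\in CA(x)\setminus(CA(y)\cup\{y\})$.
   Context: Credit-attribution game: authors $N$, papers $P_k$ with author sets $Auth_k$ and weights $w_k\in\mathbb{R}_+$; $CA(z)$ is the set of coauthors of $z$; $C(x,l)=\sum w_k$ over papers authored by both $x$ and $l$. $v_{FC}(S)=\sum\{w_k:Auth_k\cap S\ne\emptyset\}$. For $T\subseteq S$, $\Pi_{T,S}=\prod_{i\in T}p_i\prod_{i\in S\setminus T}(1-p_i)$; reliability extension $\overline v(S)=\sum_{T\subseteq S}v(T)\Pi_{T,S}$. Shapley value $Sh[v](x)=\frac1{n!}\sum_\pi[v(S^x_\pi\cup\{x\})-v(S^x_\pi)]$. Fractional attack on $x$: $p_x$ fixed; for $j\ne x$ choose $p_j\in[0,1]$ at cost $u_j(p_j)=L_j(p^*_j-p_j)$ if $p_j<p^*_j$, $R_j(p_j-p^*_j)$ otherwise; feasible if the total cost is at most $B$. *)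

theory Defs
  imports Complex_Main "HOL-Combinatorics.Multiset_Permutations"
begin

definition coauthors :: "'a set \<Rightarrow> 'k set \<Rightarrow> ('k \<Rightarrow> 'a set) \<Rightarrow> 'a \<Rightarrow> 'a set" where
  "coauthors N P Auth z = {l \<in> N. l \<noteq> z \<and> (\<exists>k\<in>P. z \<in> Auth k \<and> l \<in> Auth k)}"

definition joint_credit :: "'k set \<Rightarrow> ('k \<Rightarrow> 'a set) \<Rightarrow> ('k \<Rightarrow> real) \<Rightarrow> 'a \<Rightarrow> 'a \<Rightarrow> real" where
  "joint_credit P Auth w x l = (\<Sum>k\<in>{k\<in>P. x \<in> Auth k \<and> l \<in> Auth k}. w k)"

definition v_FC :: "'k set \<Rightarrow> ('k \<Rightarrow> 'a set) \<Rightarrow> ('k \<Rightarrow> real) \<Rightarrow> 'a set \<Rightarrow> real" where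
  "v_FC P Auth w S = (\<Sum>k\<in>{k\<in>P. Auth k \<inter> S \<noteq> {}}. w k)"

definition Pi_rel :: "('a \<Rightarrow> real) \<Rightarrow> 'a set \<Rightarrow> 'a set \<Rightarrow> real" where
  "Pi_rel p T S = (\<Prod>i\<in>T. p i) * (\<Prod>i\<in>S - T. 1 - p i)"

definition rel_ext :: "('a set \<Rightarrow> real) \<Rightarrow> ('a \<Rightarrow> real) \<Rightarrow> 'a set \<Rightarrow> real" where
  "rel_ext v p S = (\<Sum>T\<in>Pow S. v T * Pi_rel p T S)"

definition preds :: "'a list \<Rightarrow> 'a \<Rightarrow> 'a set" where
  "preds ord x = set (takeWhile (\<lambda>z. z \<noteq> x) ord)"

definition shapley :: "'a set \<Rightarrow> ('a set \<Rightarrow> real) \<Rightarrow> 'a \<Rightarrow> real" where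
  "shapley N v x = (1 / fact (card N)) *
     (\<Sum>ord\<in>permutations_of_set N. v (insert x (preds ord x)) - v (preds ord x))"

definition attack_cost :: "'a set \<Rightarrow> ('a \<Rightarrow> real) \<Rightarrow> ('a \<Rightarrow> real) \<Rightarrow> ('a \<Rightarrow> real) \<Rightarrow> 'a \<Rightarrow> ('a \<Rightarrow> real) \<Rightarrow> real" where
  "attack_cost N L R pstar x q =
     (\<Sum>j\<in>N - {x}. if q j < pstar j then L j * (pstar j - q j) else R j * (q j - pstar j))"

definition feasible_attack :: "'a set \<Rightarrow> ('a \<Rightarrow> real) \<Rightarrow> ('a \<Rightarrow> real) \<Rightarrow> ('a \<Rightarrow> real) \<Rightarrow> real \<Rightarrow> 'a \<Rightarrow> ('a \<Rightarrow> real) \<Rightarrow> bool" where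
  "feasible_attack N L R pstar B x q \<longleftrightarrow>
     q x = pstar x \<and> (\<forall>j\<in>N - {x}. 0 \<le> q j \<and> q j \<le> 1) \<and> attack_cost N L R pstar x q \<le> B"

definition pairwise_attack :: "'a set \<Rightarrow> 'k set \<Rightarrow> ('k \<Rightarrow> 'a set) \<Rightarrow> ('a \<Rightarrow> real) \<Rightarrow> ('a \<Rightarrow> real) \<Rightarrow> ('a \<Rightarrow> real) \<Rightarrow> real \<Rightarrow> 'a \<Rightarrow> 'a \<Rightarrow> ('a \<Rightarrow> real) \<Rightarrow> bool" where
  "pairwise_attack N P Auth L R pstar B x y q \<longleftrightarrow>
     feasible_attack N L R pstar B x q \<and>
     (\<forall>j\<in>insert y (coauthors N P Auth y) - {x}. q j = pstar j)"

fun greedy :: "('a \<Rightarrow> real) \<Rightarrow> ('a \<Rightarrow> real) \<Rightarrow> real \<Rightarrow> 'a list \<Rightarrow> ('a \<Rightarrow> real)" where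
  "greedy R pstar b [] = pstar"
| "greedy R pstar b (l # ls) =
     (if R l * (1 - pstar l) \<le> b
      then (greedy R pstar (b - R l * (1 - pstar l)) ls)(l := 1)
      else pstar(l := pstar l + b / R l))"

end

theory Submission
  imports Defs
begin

text \<open>In the reliability extension of the full credit game a paper earns its weight unless all of
  its authors in the coalition fail, so the value of S is \<open>\<Sum>\<^sub>k w\<^sub>k (1 - \<Prod>(1 - p\<^sub>i))\<close>, the
  product ranging over the authors of k in S. For a paper with authors x and l, the marginal
  contribution of x is \<open>w\<^sub>k p\<^sub>x (1 - p\<^sub>l)\<close> if l precedes x and \<open>w\<^sub>k p\<^sub>x\<close> otherwise; since l precedes x
  in exactly half of all orderings, the Shapley value of x is \<open>p\<^sub>x (\<Sum>\<^sub>k\<^sub>\<ni>\<^sub>x w\<^sub>k) - p\<^sub>x/2 \<Sum>\<^sub>l C(x,l) p\<^sub>l\<close>.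
  A pairwise attack may only change \<open>p\<^sub>l\<close> for coauthors l of x outside \<open>CA(y) \<union> {y}\<close>, so minimizing
  the Shapley value is a fractional knapsack problem: maximize \<open>\<Sum>\<^sub>l C(x,l) p\<^sub>l\<close> where raising \<open>p\<^sub>l\<close>
  costs \<open>R\<^sub>l\<close> per unit and lowering it never helps. The greedy order by decreasing \<open>C(x,l)/R\<^sub>l\<close> solves it.\<close>

lemma sum_Pi_rel_disjoint:
  assumes "finite S"
  shows "(\<Sum>T\<in>Pow S. (if A \<inter> T = {} then 1 else 0) * Pi_rel p T S) = (\<Prod>i\<in>S \<inter> A. 1 - p i)"
proof -
  have "(\<Sum>T\<in>Pow S. (if A \<inter> T = {} then 1 else 0) * Pi_rel p T S)
      = (\<Sum>T\<in>Pow S. (\<Prod>i\<in>T. if i \<in> A then 0 else p i) * (\<Prod>i\<in>S - T. 1 - p i))"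
  proof (rule sum.cong[OF refl])
    fix T assume "T \<in> Pow S"
    then have "finite T" using assms finite_subset by auto
    then have "(\<Prod>i\<in>T. if i \<in> A then 0 else p i) = (if A \<inter> T = {} then 1 else 0) * (\<Prod>i\<in>T. p i)"
      by (cases "A \<inter> T = {}") (auto intro!: prod.cong prod_zero)
    then show "(if A \<inter> T = {} then 1 else 0) * Pi_rel p T S
        = (\<Prod>i\<in>T. if i \<in> A then 0 else p i) * (\<Prod>i\<in>S - T. 1 - p i)"
      by (simp add: Pi_rel_def)
  qed
  also have "\<dots> = (\<Prod>i\<in>S. (if i \<in> A then 0 else p i) + (1 - p i))"
    by (rule prod_add[OF assms, symmetric])
  also have "\<dots> = (\<Prod>i\<in>S. if i \<in> A then 1 - p i else 1)"
    by (auto intro!: prod.cong)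
  also have "\<dots> = (\<Prod>i\<in>S \<inter> A. 1 - p i)"
    using prod.inter_restrict[OF assms, of "\<lambda>i. 1 - p i" A] by (simp add: if_distrib)
  finally show ?thesis .
qed

lemma rel_ext_v_FC:
  assumes "finite S" "finite P"
  shows "rel_ext (v_FC P Auth w) p S = (\<Sum>k\<in>P. w k * (1 - (\<Prod>i\<in>Auth k \<inter> S. 1 - p i)))"
proof -
  have "rel_ext (v_FC P Auth w) p S =
     (\<Sum>T\<in>Pow S. (\<Sum>k\<in>P. w k * (1 - (if Auth k \<inter> T = {} then 1 else 0))) * Pi_rel p T S)"
    unfolding rel_ext_def v_FC_def
    by (rule sum.cong[OF refl]) (auto simp add: sum.inter_filter[OF assms(2)] intro!: sum.cong)
  also have "\<dots> = (\<Sum>k\<in>P. w k * (\<Sum>T\<in>Pow S. (1 - (if Auth k \<inter> T = {} then 1 else 0)) * Pi_rel p T S))"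
    by (simp add: sum_distrib_left sum_distrib_right sum.swap[of _ "Pow S"] mult.assoc)
  also have "\<dots> = (\<Sum>k\<in>P. w k * (1 - (\<Prod>i\<in>Auth k \<inter> S. 1 - p i)))"
  proof (rule sum.cong[OF refl])
    fix k
    have "(\<Sum>T\<in>Pow S. (1 - (if Auth k \<inter> T = {} then 1 else 0)) * Pi_rel p T S)
       = (\<Sum>T\<in>Pow S. Pi_rel p T S) - (\<Sum>T\<in>Pow S. (if Auth k \<inter> T = {} then 1 else 0) * Pi_rel p T S)"
      by (simp add: left_diff_distrib sum_subtractf)
    also have "\<dots> = 1 - (\<Prod>i\<in>Auth k \<inter> S. 1 - p i)"
      using sum_Pi_rel_disjoint[OF assms(1), of "{}" p] sum_Pi_rel_disjoint[OF assms(1), of "Auth k" p]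
      by (simp add: Int_commute)
    finally show "w k * (\<Sum>T\<in>Pow S. (1 - (if Auth k \<inter> T = {} then 1 else 0)) * Pi_rel p T S)
        = w k * (1 - (\<Prod>i\<in>Auth k \<inter> S. 1 - p i))" by simp
  qed
  finally show ?thesis .
qed

lemma takeWhile_neq_append_Cons: "x \<notin> set us \<Longrightarrow> takeWhile (\<lambda>z. z \<noteq> x) (us @ x # vs) = us"
  by (induction us) auto

lemma preds_map_swap:
  assumes d: "distinct ord" and xo: "x \<in> set ord" and ao: "a \<in> set ord" and ax: "a \<noteq> x"
  defines "\<sigma> \<equiv> (\<lambda>z. if z = x then a else if z = a then x else z)"
  shows "a \<in> preds (map \<sigma> ord) x \<longleftrightarrow> a \<notin> preds ord x"
proof -
  obtain us vs where o: "ord = us @ x # vs" and xus: "x \<notin> set us"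
    using split_list_first[OF xo] by blast
  have p1: "preds ord x = set us" unfolding preds_def o using xus takeWhile_neq_append_Cons by metis
  show ?thesis
  proof (cases "a \<in> set us")
    case True
    then obtain us1 us2 where u: "us = us1 @ a # us2" using split_list by metis
    have "a \<notin> set us1" "x \<notin> set us1" using d xus unfolding o u by auto
    then have n1: "x \<notin> set (map \<sigma> us1)" and n2: "a \<notin> set (map \<sigma> us1)"
      unfolding \<sigma>_def using ax by auto
    have "map \<sigma> ord = map \<sigma> us1 @ x # (map \<sigma> us2 @ a # map \<sigma> vs)"
      unfolding o u \<sigma>_def using ax by simp
    then have "preds (map \<sigma> ord) x = set (map \<sigma> us1)"
      unfolding preds_def using n1 takeWhile_neq_append_Cons by metis
    then show ?thesis using n2 True p1 by simp
  next
    case False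
    then have "a \<in> set vs" using ao ax o by auto
    then obtain vs1 vs2 where v: "vs = vs1 @ a # vs2" using split_list by metis
    have "a \<notin> set vs1" using d unfolding o v by auto
    then have n1: "x \<notin> set (map \<sigma> us @ a # map \<sigma> vs1)"
      unfolding \<sigma>_def using ax False by auto
    have "map \<sigma> ord = (map \<sigma> us @ a # map \<sigma> vs1) @ x # map \<sigma> vs2"
      unfolding o v \<sigma>_def using ax by simp
    then have "preds (map \<sigma> ord) x = set (map \<sigma> us @ a # map \<sigma> vs1)"
      unfolding preds_def using n1 takeWhile_neq_append_Cons by metis
    then show ?thesis using False p1 by simp
  qed
qed

lemma sum_permutations_preds_indicator:
  assumes "finite N" "a \<in> N" "x \<in> N" "a \<noteq> x"
  shows "(\<Sum>ord\<in>permutations_of_set N. if a \<in> preds ord x then 1 else 0 :: real)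
         = real (card (permutations_of_set N)) / 2"
proof -
  define \<sigma> where "\<sigma> = (\<lambda>z. if z = x then a else if z = a then x else z)"
  have \<sigma>\<sigma>: "\<sigma> (\<sigma> z) = z" for z unfolding \<sigma>_def by auto
  have map\<sigma>\<sigma>: "map \<sigma> (map \<sigma> ord) = ord" for ord by (simp add: \<sigma>\<sigma> map_idI)
  have "inj \<sigma>" by (metis \<sigma>\<sigma> injI)
  moreover have "\<sigma> ` N = N"
    using assms unfolding \<sigma>_def by (auto intro: image_eqI[where x="\<sigma> _"] simp: \<sigma>\<sigma>[unfolded \<sigma>_def])
  ultimately have map\<sigma>_perm: "map \<sigma> ord \<in> permutations_of_set N" if "ord \<in> permutations_of_set N" for ord
    using that by (auto simp: permutations_of_set_def distinct_map intro: inj_on_subset)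
  have "(\<Sum>ord\<in>permutations_of_set N. if a \<in> preds ord x then 1 else 0 :: real)
      = (\<Sum>ord\<in>permutations_of_set N. if a \<in> preds (map \<sigma> ord) x then 1 else 0)"
    by (rule sum.reindex_bij_witness[where i="map \<sigma>" and j="map \<sigma>"])
      (auto simp: map\<sigma>\<sigma> map\<sigma>_perm simp del: map_map)
  also have "\<dots> = (\<Sum>ord\<in>permutations_of_set N. if a \<in> preds ord x then 0 else 1)"
    using preds_map_swap[of _ x a] assms
    by (intro sum.cong) (auto simp: permutations_of_set_def \<sigma>_def)
  finally have "(\<Sum>ord\<in>permutations_of_set N. if a \<in> preds ord x then 1 else 0 :: real)
      = (\<Sum>ord\<in>permutations_of_set N. if a \<in> preds ord x then 0 else 1)" .
  moreover have "(\<Sum>ord\<in>permutations_of_set N. if a \<in> preds ord x then 1 else 0 :: real)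
      + (\<Sum>ord\<in>permutations_of_set N. if a \<in> preds ord x then 0 else 1)
      = real (card (permutations_of_set N))"
    by (simp add: sum.distrib[symmetric] if_distrib cong: if_cong)
  ultimately show ?thesis by simp
qed

definition other_author :: "('k \<Rightarrow> 'a set) \<Rightarrow> 'a \<Rightarrow> 'k \<Rightarrow> 'a" where
  "other_author Auth x k = the_elem (Auth k - {x})"

lemma two_authors_eq:
  assumes "card (Auth k) = 2" "x \<in> Auth k"
  shows "Auth k = {x, other_author Auth x k} \<and> other_author Auth x k \<noteq> x"
proof -
  obtain z where z: "Auth k = {x, z}" "z \<noteq> x"
    using assms card_2_iff by (metis insert_commute insert_iff singletonD)
  then have "Auth k - {x} = {z}" by auto
  then show ?thesis using z by (simp add: other_author_def)
qed

lemma rel_ext_v_FC_marginal: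
  assumes "finite S" "finite P" "x \<notin> S" "\<forall>k\<in>P. card (Auth k) = 2"
  shows "rel_ext (v_FC P Auth w) q (insert x S) - rel_ext (v_FC P Auth w) q S
    = (\<Sum>k\<in>{k\<in>P. x \<in> Auth k}. w k * q x *
          (1 - q (other_author Auth x k) * (if other_author Auth x k \<in> S then 1 else 0)))"
proof -
  have "rel_ext (v_FC P Auth w) q (insert x S) - rel_ext (v_FC P Auth w) q S
     = (\<Sum>k\<in>P. w k * ((\<Prod>i\<in>Auth k \<inter> S. 1 - q i) - (\<Prod>i\<in>Auth k \<inter> insert x S. 1 - q i)))"
    using assms by (simp add: rel_ext_v_FC sum_subtractf[symmetric] right_diff_distrib)
  also have "\<dots> = (\<Sum>k\<in>P. if x \<in> Auth k then w k * q x *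
          (1 - q (other_author Auth x k) * (if other_author Auth x k \<in> S then 1 else 0)) else 0)"
  proof (rule sum.cong[OF refl])
    fix k assume "k \<in> P"
    show "w k * ((\<Prod>i\<in>Auth k \<inter> S. 1 - q i) - (\<Prod>i\<in>Auth k \<inter> insert x S. 1 - q i)) =
        (if x \<in> Auth k then w k * q x *
          (1 - q (other_author Auth x k) * (if other_author Auth x k \<in> S then 1 else 0)) else 0)"
    proof (cases "x \<in> Auth k")
      case True
      with two_authors_eq[of Auth k x] assms \<open>k \<in> P\<close>
      have "Auth k = {x, other_author Auth x k}" "other_author Auth x k \<noteq> x" by auto
      then show ?thesis using True \<open>x \<notin> S\<close>
        by (cases "other_author Auth x k \<in> S") (auto simp: Int_insert_left algebra_simps)
    next
      case False
      then have "Auth k \<inter> insert x S = Auth k \<inter> S" by auto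
      then show ?thesis using False by simp
    qed
  qed
  also have "\<dots> = (\<Sum>k\<in>{k\<in>P. x \<in> Auth k}. w k * q x *
          (1 - q (other_author Auth x k) * (if other_author Auth x k \<in> S then 1 else 0)))"
    by (simp add: sum.inter_filter[OF assms(2)])
  finally show ?thesis .
qed

lemma shapley_rel_ext_v_FC_two_authors:
  assumes fN: "finite N" and fP: "finite P" and au: "\<forall>k\<in>P. Auth k \<subseteq> N \<and> card (Auth k) = 2"
    and xN: "x \<in> N"
  shows "shapley N (rel_ext (v_FC P Auth w) q) x
    = (\<Sum>k\<in>{k\<in>P. x \<in> Auth k}. w k * q x * (1 - q (other_author Auth x k) / 2))"
proof -
  let ?Px = "{k\<in>P. x \<in> Auth k}" and ?Pe = "permutations_of_set N" and ?o = "other_author Auth x"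
  let ?v = "rel_ext (v_FC P Auth w) q"
  have "(\<Sum>ord\<in>?Pe. ?v (insert x (preds ord x)) - ?v (preds ord x))
     = (\<Sum>ord\<in>?Pe. \<Sum>k\<in>?Px. w k * q x * (1 - q (?o k) * (if ?o k \<in> preds ord x then 1 else 0)))"
  proof (rule sum.cong[OF refl])
    fix ord
    have "finite (preds ord x)" "x \<notin> preds ord x"
      unfolding preds_def by (auto dest: set_takeWhileD)
    moreover have "\<forall>k\<in>P. card (Auth k) = 2" using au by blast
    ultimately show "?v (insert x (preds ord x)) - ?v (preds ord x)
       = (\<Sum>k\<in>?Px. w k * q x * (1 - q (?o k) * (if ?o k \<in> preds ord x then 1 else 0)))"
      by (rule rel_ext_v_FC_marginal[OF _ fP])
  qed
  also have "\<dots> = (\<Sum>k\<in>?Px. w k * q x * (\<Sum>ord\<in>?Pe. 1 - q (?o k) * (if ?o k \<in> preds ord x then 1 else 0)))"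
    by (simp add: sum.swap[of _ ?Pe] sum_distrib_left)
  also have "\<dots> = (\<Sum>k\<in>?Px. w k * q x * (real (card ?Pe) * (1 - q (?o k) / 2)))"
  proof (rule sum.cong[OF refl])
    fix k assume "k \<in> ?Px"
    with two_authors_eq[of Auth k x] au have "?o k \<in> N" "?o k \<noteq> x" by auto
    then have "(\<Sum>ord\<in>?Pe. 1 - q (?o k) * (if ?o k \<in> preds ord x then 1 else 0))
        = real (card ?Pe) * (1 - q (?o k) / 2)"
      using sum_permutations_preds_indicator[OF fN _ xN, of "?o k"]
      by (simp add: sum_subtractf sum_distrib_left[symmetric] algebra_simps)
    then show "w k * q x * (\<Sum>ord\<in>?Pe. 1 - q (?o k) * (if ?o k \<in> preds ord x then 1 else 0))
        = w k * q x * (real (card ?Pe) * (1 - q (?o k) / 2))" by simp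
  qed
  finally show ?thesis
    using fN by (simp add: shapley_def sum_distrib_left algebra_simps)
qed

lemma sum_other_author_eq_joint_credit:
  assumes fP: "finite P" and au: "\<forall>k\<in>P. Auth k \<subseteq> N \<and> card (Auth k) = 2"
  shows "(\<Sum>k\<in>{k\<in>P. x \<in> Auth k}. w k * f (other_author Auth x k))
       = (\<Sum>l\<in>coauthors N P Auth x. joint_credit P Auth w x l * f l)"
proof -
  let ?Px = "{k\<in>P. x \<in> Auth k}" and ?o = "other_author Auth x"
  have ae: "Auth k = {x, ?o k} \<and> ?o k \<noteq> x" if "k \<in> ?Px" for k
    using two_authors_eq[of Auth k x] au that by auto
  have img: "?o ` ?Px = coauthors N P Auth x"
  proof
    show "?o ` ?Px \<subseteq> coauthors N P Auth x"
      using ae au unfolding coauthors_def by fastforce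
    show "coauthors N P Auth x \<subseteq> ?o ` ?Px"
    proof
      fix l assume "l \<in> coauthors N P Auth x"
      then obtain k where k: "k \<in> P" "x \<in> Auth k" "l \<in> Auth k" "l \<noteq> x"
        unfolding coauthors_def by auto
      then have "l = ?o k" using ae[of k] by auto
      then show "l \<in> ?o ` ?Px" using k by auto
    qed
  qed
  have fibre: "{k \<in> ?Px. ?o k = l} = {k\<in>P. x \<in> Auth k \<and> l \<in> Auth k}" if "l \<noteq> x" for l
    using ae that by blast
  have "(\<Sum>k\<in>?Px. w k * f (?o k)) = (\<Sum>l\<in>?o ` ?Px. \<Sum>k\<in>{k \<in> ?Px. ?o k = l}. w k * f (?o k))"
    by (rule sum.image_gen) (simp add: fP)
  also have "\<dots> = (\<Sum>l\<in>?o ` ?Px. \<Sum>k\<in>{k \<in> ?Px. ?o k = l}. w k * f l)"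
    by (intro sum.cong) auto
  also have "\<dots> = (\<Sum>l\<in>coauthors N P Auth x. \<Sum>k\<in>{k\<in>P. x \<in> Auth k \<and> l \<in> Auth k}. w k * f l)"
    unfolding img using fibre by (intro sum.cong) (auto simp: coauthors_def)
  finally show ?thesis by (simp add: joint_credit_def sum_distrib_right)
qed

lemma shapley_two_authors_joint_credit:
  assumes "finite N" "finite P" "\<forall>k\<in>P. Auth k \<subseteq> N \<and> card (Auth k) = 2" "x \<in> N"
  shows "shapley N (rel_ext (v_FC P Auth w) q) x
    = q x * (\<Sum>k\<in>{k\<in>P. x \<in> Auth k}. w k)
      - q x / 2 * (\<Sum>l\<in>coauthors N P Auth x. joint_credit P Auth w x l * q l)"
proof -
  let ?Px = "{k\<in>P. x \<in> Auth k}" and ?o = "other_author Auth x"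
  have "(\<Sum>k\<in>?Px. w k * q x * (1 - q (?o k) / 2))
      = q x * (\<Sum>k\<in>?Px. w k) - q x / 2 * (\<Sum>k\<in>?Px. w k * q (?o k))"
    by (simp add: sum_subtractf sum_distrib_left sum_divide_distrib algebra_simps)
  then show ?thesis
    using shapley_rel_ext_v_FC_two_authors[OF assms, where w=w and q=q]
      sum_other_author_eq_joint_credit[OF assms(2,3), where x=x and w=w and f=q]
    by simp
qed

lemma greedy_notin: "j \<notin> set ls \<Longrightarrow> greedy R pstar b ls j = pstar j"
  by (induction ls arbitrary: b) auto

lemma greedy_bounds:
  assumes "\<forall>j\<in>set ls. R j > 0 \<and> pstar j \<le> 1" "b \<ge> 0" "j \<in> set ls"
  shows "pstar j \<le> greedy R pstar b ls j \<and> greedy R pstar b ls j \<le> 1"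
  using assms
proof (induction ls arbitrary: b)
  case Nil then show ?case by simp
next
  case (Cons l ls)
  show ?case
  proof (cases "R l * (1 - pstar l) \<le> b")
    case True
    then show ?thesis using Cons.IH[of "b - R l * (1 - pstar l)"] Cons.prems by auto
  next
    case False
    have "R l > 0" using Cons.prems by auto
    then have "0 \<le> b / R l" "b / R l \<le> 1 - pstar l"
      using False Cons.prems by (simp_all add: divide_le_eq mult.commute)
    then show ?thesis using False Cons.prems by auto
  qed
qed

lemma sum_greedy_Cons_full:
  assumes "l \<notin> set ls" "R l * (1 - pstar l) \<le> b"
  shows "(\<Sum>j\<in>set (l # ls). c j * (greedy R pstar b (l # ls) j - pstar j))
    = c l * (1 - pstar l) + (\<Sum>j\<in>set ls. c j * (greedy R pstar (b - R l * (1 - pstar l)) ls j - pstar j))"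
  using assms by (auto intro!: sum.cong)

lemma sum_greedy_Cons_partial:
  assumes "l \<notin> set ls" "\<not> R l * (1 - pstar l) \<le> b"
  shows "(\<Sum>j\<in>set (l # ls). c j * (greedy R pstar b (l # ls) j - pstar j)) = c l * (b / R l)"
  using assms by (auto intro!: sum.neutral)

lemma greedy_cost_le:
  assumes "distinct ls" "\<forall>j\<in>set ls. R j > 0" "b \<ge> 0"
  shows "(\<Sum>j\<in>set ls. R j * (greedy R pstar b ls j - pstar j)) \<le> b"
  using assms
proof (induction ls arbitrary: b)
  case Nil then show ?case by simp
next
  case (Cons l ls)
  then have "l \<notin> set ls" "R l > 0" by auto
  show ?case
  proof (cases "R l * (1 - pstar l) \<le> b")
    case True
    then have "(\<Sum>j\<in>set ls. R j * (greedy R pstar (b - R l * (1 - pstar l)) ls j - pstar j))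
        \<le> b - R l * (1 - pstar l)"
      using Cons.IH Cons.prems by simp
    then show ?thesis
      using sum_greedy_Cons_full[where R=R and pstar=pstar and b=b and c=R, OF \<open>l \<notin> set ls\<close> True]
      by linarith
  next
    case False
    then show ?thesis
      using sum_greedy_Cons_partial[where R=R and pstar=pstar and b=b and c=R, OF \<open>l \<notin> set ls\<close> False] \<open>R l > 0\<close> by simp
  qed
qed

lemma mult_le_mult_max_0: "0 \<le> r \<Longrightarrow> r \<le> (\<theta>::real) \<Longrightarrow> r * z \<le> \<theta> * max 0 z"
  by (cases "z \<ge> 0") (auto intro: mult_right_mono mult_nonneg_nonpos)

text \<open>Lagrangian form of the fractional knapsack bound, with \<open>\<theta>\<close> an upper bound on all ratios
  \<open>c\<^sub>j/R\<^sub>j\<close>: it is the statement that survives the induction over the greedy order, where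
  \<open>\<theta>\<close> is replaced by the ratio of the head.\<close>
lemma greedy_knapsack_lagrangian:
  assumes "distinct ls" "sorted_wrt (\<lambda>a b. c a / R a \<ge> c b / R b) ls"
    "\<forall>j\<in>set ls. R j > 0 \<and> c j \<ge> 0" "\<theta> \<ge> 0" "\<forall>j\<in>set ls. c j \<le> \<theta> * R j"
    "b \<ge> 0" "\<forall>j\<in>set ls. pstar j \<le> q j \<and> q j \<le> 1"
  shows "(\<Sum>j\<in>set ls. c j * (q j - pstar j)) \<le> (\<Sum>j\<in>set ls. c j * (greedy R pstar b ls j - pstar j))
          + \<theta> * max 0 ((\<Sum>j\<in>set ls. R j * (q j - pstar j)) - b)"
  using assms
proof (induction ls arbitrary: b \<theta>)
  case Nil then show ?case by simp
next
  case (Cons l ls)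
  have lls: "l \<notin> set ls" and Rl: "R l > 0" "c l \<ge> 0" using Cons.prems by auto
  define r where "r = c l / R l"
  have cl: "c l = r * R l" and r0: "r \<ge> 0" unfolding r_def using Rl by simp_all
  have r\<theta>: "r \<le> \<theta>" using Cons.prems(5) Rl unfolding r_def by (simp add: divide_le_eq)
  have cj: "c j \<le> r * R j" if "j \<in> set ls" for j
  proof -
    have "c j / R j \<le> r" using Cons.prems(2) that unfolding r_def by auto
    then show ?thesis using Cons.prems(3) that by (simp add: divide_le_eq)
  qed
  define s where "s = (\<Sum>j\<in>set ls. R j * (q j - pstar j))"
  define Q where "Q = (\<Sum>j\<in>set ls. c j * (q j - pstar j))"
  define d where "d = q l - pstar l"
  have d: "0 \<le> d" "d \<le> 1 - pstar l" using Cons.prems(7) unfolding d_def by auto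
  have Qs: "Q \<le> r * s" unfolding Q_def s_def sum_distrib_left
    using cj Cons.prems(7) by (auto intro!: sum_mono mult_right_mono simp: mult.assoc[symmetric])
  have LHS: "(\<Sum>j\<in>set (l # ls). c j * (q j - pstar j)) = r * R l * d + Q"
    using lls cl unfolding Q_def d_def by simp
  have S: "(\<Sum>j\<in>set (l # ls). R j * (q j - pstar j)) = R l * d + s"
    using lls unfolding s_def d_def by simp
  have max_bound: "r * (R l * d + s - b) \<le> \<theta> * max 0 (R l * d + s - b)"
    by (rule mult_le_mult_max_0[OF r0 r\<theta>])
  show ?case
  proof (cases "R l * (1 - pstar l) \<le> b")
    case True
    define b' where "b' = b - R l * (1 - pstar l)"
    define G where "G = (\<Sum>j\<in>set ls. c j * (greedy R pstar b' ls j - pstar j))"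
    have IH: "Q \<le> G + r * max 0 (s - b')"
      using Cons.IH[where b=b' and \<theta>=r] Cons.prems True r0 cj unfolding Q_def G_def s_def b'_def by auto
    have "r * R l * d + r * max 0 (s - b') \<le> r * R l * (1 - pstar l) + \<theta> * max 0 (R l * d + s - b)"
    proof (cases "s \<le> b'")
      case True
      have "r * R l * d \<le> r * R l * (1 - pstar l)" using d r0 Rl by (simp add: mult_left_mono)
      moreover have "0 \<le> \<theta> * max 0 (R l * d + s - b)" using Cons.prems(4) by simp
      ultimately show ?thesis using True by simp
    next
      case False
      then show ?thesis using max_bound unfolding b'_def by (simp add: algebra_simps)
    qed
    moreover have "c l * (1 - pstar l) = r * R l * (1 - pstar l)" using cl by simp
    ultimately show ?thesis
      unfolding LHS S sum_greedy_Cons_full[where R=R and pstar=pstar and b=b, OF lls True] using IH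
      unfolding G_def b'_def by linarith
  next
    case False
    then show ?thesis
      unfolding LHS S sum_greedy_Cons_partial[where R=R and pstar=pstar and b=b, OF lls False] using Qs max_bound cl Rl
      by (simp add: algebra_simps)
  qed
qed

lemma greedy_knapsack_optimal:
  assumes "distinct ls" "sorted_wrt (\<lambda>a b. c a / R a \<ge> c b / R b) ls"
    "\<forall>j\<in>set ls. R j > 0 \<and> c j \<ge> 0" "b \<ge> 0"
    "\<forall>j\<in>set ls. pstar j \<le> q j \<and> q j \<le> 1" "(\<Sum>j\<in>set ls. R j * (q j - pstar j)) \<le> b"
  shows "(\<Sum>j\<in>set ls. c j * q j) \<le> (\<Sum>j\<in>set ls. c j * greedy R pstar b ls j)"
proof -
  define \<theta> where "\<theta> = (\<Sum>j\<in>set ls. c j / R j)"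
  have "c j \<le> \<theta> * R j" if "j \<in> set ls" for j
  proof -
    have "c j / R j \<le> \<theta>" unfolding \<theta>_def
      by (rule member_le_sum[OF that]) (use assms(3) in auto)
    then show ?thesis using assms(3) that by (simp add: divide_le_eq)
  qed
  moreover have "\<theta> \<ge> 0" unfolding \<theta>_def using assms(3) by (auto intro!: sum_nonneg)
  ultimately have "(\<Sum>j\<in>set ls. c j * (q j - pstar j))
      \<le> (\<Sum>j\<in>set ls. c j * (greedy R pstar b ls j - pstar j))"
    using greedy_knapsack_lagrangian[OF assms(1-3), where \<theta>=\<theta> and b=b and pstar=pstar and q=q] assms(4-6) by simp
  then show ?thesis by (simp add: right_diff_distrib sum_subtractf)
qed

lemma coauthors_subset: "coauthors N P Auth z \<subseteq> N - {z}"
  unfolding coauthors_def by auto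

lemma joint_credit_nonneg: "\<forall>k\<in>P. w k > 0 \<Longrightarrow> joint_credit P Auth w x l \<ge> 0"
  unfolding joint_credit_def by (intro sum_nonneg) (simp add: less_imp_le)

lemma attack_cost_ge_raise_cost:
  assumes "finite N" "A \<subseteq> N - {x}" "\<forall>l\<in>N. L l > 0 \<and> R l > 0"
  shows "(\<Sum>j\<in>A. R j * (max (q j) (pstar j) - pstar j)) \<le> attack_cost N L R pstar x q"
proof -
  have "(\<Sum>j\<in>A. R j * (max (q j) (pstar j) - pstar j))
      \<le> (\<Sum>j\<in>A. if q j < pstar j then L j * (pstar j - q j) else R j * (q j - pstar j))"
    using assms by (intro sum_mono) (force simp: max_def)
  also have "\<dots> \<le> attack_cost N L R pstar x q"
    unfolding attack_cost_def using assms by (intro sum_mono2) auto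
  finally show ?thesis .
qed

lemma greedy_pairwise_attack:
  assumes "finite N" "distinct ls" "set ls = coauthors N P Auth x - (coauthors N P Auth y \<union> {y})"
    and "\<forall>j\<in>N - {x}. 0 \<le> pstar j \<and> pstar j \<le> 1" "\<forall>l\<in>N. L l > 0 \<and> R l > 0" "B \<ge> 0"
  shows "pairwise_attack N P Auth L R pstar B x y (greedy R pstar B ls)"
proof -
  let ?g = "greedy R pstar B ls"
  have "set ls \<subseteq> coauthors N P Auth x" using assms(3) by simp
  then have ls: "set ls \<subseteq> N - {x}" using coauthors_subset by (rule order_trans)
  then have ls_R: "\<forall>j\<in>set ls. R j > 0 \<and> pstar j \<le> 1" using assms(4,5) by auto
  have bounds: "pstar j \<le> ?g j \<and> ?g j \<le> 1" if "j \<in> set ls" for j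
    using greedy_bounds[OF ls_R assms(6) that] .
  have cost_j: "(if ?g j < pstar j then L j * (pstar j - ?g j) else R j * (?g j - pstar j))
      = (if j \<in> set ls then R j * (?g j - pstar j) else 0)" for j
    using bounds[of j] greedy_notin[of j ls R pstar B] by (cases "j \<in> set ls") auto
  have "attack_cost N L R pstar x ?g = (\<Sum>j\<in>N - {x}. if j \<in> set ls then R j * (?g j - pstar j) else 0)"
    unfolding attack_cost_def cost_j ..
  also have "\<dots> = (\<Sum>j\<in>(N - {x}) \<inter> set ls. R j * (?g j - pstar j))"
    by (rule sum.inter_restrict[symmetric]) (simp add: assms(1))
  also have "(N - {x}) \<inter> set ls = set ls" using ls by blast
  also have "(\<Sum>j\<in>set ls. R j * (?g j - pstar j)) \<le> B"
    by (rule greedy_cost_le[OF assms(2) _ assms(6)]) (use ls_R in blast)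
  finally have "attack_cost N L R pstar x ?g \<le> B" .
  moreover have "0 \<le> ?g j \<and> ?g j \<le> 1" if "j \<in> N - {x}" for j
    using bounds[of j] greedy_notin[of j ls R pstar B] assms(4) that by (cases "j \<in> set ls") force+
  moreover have "?g j = pstar j" if "j \<in> insert x (insert y (coauthors N P Auth y))" for j
    using greedy_notin[of j ls R pstar B] assms(3) ls that by blast
  ultimately show ?thesis
    unfolding pairwise_attack_def feasible_attack_def by blast
qed

text \<open>Coauthors of x outside \<open>set ls\<close> are y or coauthors of y, which a pairwise attack leaves at
  baseline; on \<open>set ls\<close>, lowering reliabilities only loses credit, so it is a knapsack problem.\<close>
lemma pairwise_attack_credit_le_greedy:
  assumes "finite N" "distinct ls" "set ls = coauthors N P Auth x - (coauthors N P Auth y \<union> {y})"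
    and "sorted_wrt (\<lambda>a b. c a / R a \<ge> c b / R b) ls" "\<forall>l. c l \<ge> 0"
    and "\<forall>j\<in>N - {x}. pstar j \<le> 1" "\<forall>l\<in>N. L l > 0 \<and> R l > 0" "B \<ge> 0"
    and "pairwise_attack N P Auth L R pstar B x y q"
  shows "(\<Sum>l\<in>coauthors N P Auth x. c l * q l)
      \<le> (\<Sum>l\<in>coauthors N P Auth x. c l * greedy R pstar B ls l)"
proof -
  let ?CA = "coauthors N P Auth x" and ?g = "greedy R pstar B ls"
  define q' where "q' j = max (q j) (pstar j)" for j
  have q: "\<forall>j\<in>N - {x}. 0 \<le> q j \<and> q j \<le> 1" "attack_cost N L R pstar x q \<le> B"
    "\<forall>j\<in>insert y (coauthors N P Auth y) - {x}. q j = pstar j"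
    using assms(9) unfolding pairwise_attack_def feasible_attack_def by auto
  have CA: "?CA \<subseteq> N - {x}" by (rule coauthors_subset)
  then have fCA: "finite ?CA" using assms(1) finite_subset by fastforce
  have ls: "set ls \<subseteq> ?CA" using assms(3) by simp
  then have ls_R: "\<forall>j\<in>set ls. R j > 0 \<and> c j \<ge> 0"
    using CA assms(5-7) by auto
  have q'_bounds: "\<forall>j\<in>set ls. pstar j \<le> q' j \<and> q' j \<le> 1"
    using ls CA q(1) assms(6) unfolding q'_def by fastforce
  have "(\<Sum>j\<in>set ls. R j * (q' j - pstar j)) \<le> attack_cost N L R pstar x q"
    unfolding q'_def using ls CA by (intro attack_cost_ge_raise_cost[OF assms(1) _ assms(7)]) auto
  then have "(\<Sum>j\<in>set ls. c j * q' j) \<le> (\<Sum>j\<in>set ls. c j * ?g j)"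
    using greedy_knapsack_optimal[OF assms(2,4) ls_R assms(8) q'_bounds] q(2) by linarith
  moreover have "(\<Sum>j\<in>set ls. c j * q j) \<le> (\<Sum>j\<in>set ls. c j * q' j)"
    using assms(5) by (intro sum_mono) (simp add: q'_def mult_left_mono)
  moreover have "q j = ?g j" if "j \<in> ?CA - set ls" for j
  proof -
    have "j \<in> insert y (coauthors N P Auth y) - {x}" "j \<notin> set ls"
      using that CA assms(3) by auto
    then show ?thesis using q(3) greedy_notin by metis
  qed
  then have "(\<Sum>j\<in>?CA - set ls. c j * q j) = (\<Sum>j\<in>?CA - set ls. c j * ?g j)"
    by simp
  ultimately show ?thesis
    using sum.subset_diff[OF ls fCA, of "\<lambda>j. c j * q j"]
      sum.subset_diff[OF ls fCA, of "\<lambda>j. c j * ?g j"] by linarith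
qed

theorem corollary2:
  fixes N :: "'a set" and P :: "'k set" and Auth :: "'k \<Rightarrow> 'a set" and w :: "'k \<Rightarrow> real"
    and pstar L R :: "'a \<Rightarrow> real" and B :: real and x y :: 'a and ls :: "'a list"
  assumes "finite N" and "finite P"
    and "\<forall>k\<in>P. Auth k \<subseteq> N \<and> card (Auth k) = 2"
    and "\<forall>k\<in>P. w k > 0"
    and "x \<in> N" and "y \<in> N" and "x \<noteq> y"
    and "0 \<le> pstar x" and "pstar x \<le> 1" and "0 \<le> pstar y" and "pstar y \<le> 1"
    and "\<forall>l\<in>N - {x, y}. 0 < pstar l \<and> pstar l \<le> 1"
    and "\<forall>l\<in>N. L l > 0 \<and> R l > 0"
    and "B \<ge> 0"
    and "distinct ls"
    and "set ls = coauthors N P Auth x - (coauthors N P Auth y \<union> {y})"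
    and "sorted_wrt (\<lambda>a b. joint_credit P Auth w x a / R a \<ge> joint_credit P Auth w x b / R b) ls"
  shows "pairwise_attack N P Auth L R pstar B x y (greedy R pstar B ls) \<and>
         (\<forall>q. pairwise_attack N P Auth L R pstar B x y q \<longrightarrow>
            shapley N (rel_ext (v_FC P Auth w) (greedy R pstar B ls)) x
              \<le> shapley N (rel_ext (v_FC P Auth w) q) x)"
proof -
  let ?g = "greedy R pstar B ls" and ?C = "joint_credit P Auth w x"
  have pstar: "\<forall>j\<in>N - {x}. 0 \<le> pstar j \<and> pstar j \<le> 1"
    using assms(10-12) by force
  have g: "pairwise_attack N P Auth L R pstar B x y ?g"
    using greedy_pairwise_attack[OF assms(1,15,16) pstar assms(13,14)] .
  have "shapley N (rel_ext (v_FC P Auth w) ?g) x \<le> shapley N (rel_ext (v_FC P Auth w) q) x"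
    if q: "pairwise_attack N P Auth L R pstar B x y q" for q
  proof -
    have "\<forall>l. ?C l \<ge> 0" by (intro allI joint_credit_nonneg[OF assms(4)])
    moreover have "\<forall>j\<in>N - {x}. pstar j \<le> 1" using pstar by blast
    ultimately have "(\<Sum>l\<in>coauthors N P Auth x. ?C l * q l) \<le> (\<Sum>l\<in>coauthors N P Auth x. ?C l * ?g l)"
      using pairwise_attack_credit_le_greedy[OF assms(1,15,16,17) _ _ assms(13,14) q] by blast
    moreover have "q x = pstar x" "?g x = pstar x"
      using q g unfolding pairwise_attack_def feasible_attack_def by auto
    ultimately show ?thesis
      unfolding shapley_two_authors_joint_credit[OF assms(1-3,5)]
      using assms(8) by (simp add: mult_left_mono)
  qed
  with g show ?thesis by blast
qed

end
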